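(* Fix $H\in\mathbb{R}$ and consider the framed curvature flow with $\theta$-velocity $$\upsilon_\theta=\kappa H-(\kappa\,\partial_s\psi_3+2\,\partial_s\kappa\,\psi_3)\kappa^{-2}\psi_1+(\kappa^3+\kappa\psi_3^2-\partial_s^2\kappa)\kappa^{-2}\psi_2 .$$ Then the trajectory surface $\Sigma_{\underline t}$ generated by this flow has constant mean curvature equal to $H$.
   Context: $S^1=\mathbb{R}/2\pi\mathbb{Z}$; closed curves $\Gamma_t$ parametrized by $\gamma(t,\cdot):S^1\to\mathbb{R}^3$, $g=\|\partial_u\gamma\|$, $ds=g\,du$, $\partial_s=g^{-1}\partial_u$; Frenet frame $T,N,B$, curvature $\kappa$ (assumed positive where the formulas are used), torsion $\tau$. For an angle function $\theta$: $\nu_\theta=\cos\theta N+\sin\theta B$, $\beta_\theta=T\times\nu_\theta$, $\psi_1=\kappa\cos\theta$, $\psi_2=\kappa\sin\theta$, $\psi_3=\tau+\partial_s\theta$. Framed curvature flow: $\partial_t\gamma=\kappa\nu_\theta$, $\partial_t\theta=\upsilon_\theta$ on $[0,\underline t)\times S^1$. Trajectory surface $\Sigma_{\underline t}=\bigcup_{t\in[0,\underline t)}\Gamma_t$, parametrized by $(u,t)\mapsto\gamma(t,u)$; its mean curvature is $\mathrm{tr}(\mathrm{I\!I}\,\mathrm{I}^{-1})$ (sum of principal curvatures) with respect to the unit normal $\beta_\theta$. *)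

theory Defs
  imports "HOL-Analysis.Analysis"
begin

unbundle no cross3_syntax

text \<open>A time-dependent curve is a function gamma t u (time t, parameter u);
  scalar fields such as theta are functions of (t, u) as well.\<close>

definition Du :: "(real \<Rightarrow> real \<Rightarrow> 'a::real_normed_vector) \<Rightarrow> real \<Rightarrow> real \<Rightarrow> 'a" where
  "Du F t u = vector_derivative (\<lambda>v. F t v) (at u)"

definition Dt :: "(real \<Rightarrow> real \<Rightarrow> 'a::real_normed_vector) \<Rightarrow> real \<Rightarrow> real \<Rightarrow> 'a" where
  "Dt F t u = vector_derivative (\<lambda>s. F s u) (at t)"

fun iterD :: "bool list \<Rightarrow> (real \<Rightarrow> real \<Rightarrow> 'a::real_normed_vector) \<Rightarrow> real \<Rightarrow> real \<Rightarrow> 'a" where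
  "iterD [] F = F"
| "iterD (b # ws) F = (if b then Dt else Du) (iterD ws F)"

definition smooth_on2 :: "real set \<Rightarrow> real set \<Rightarrow> (real \<Rightarrow> real \<Rightarrow> 'a::real_normed_vector) \<Rightarrow> bool" where
  "smooth_on2 I J F \<longleftrightarrow>
     (\<forall>ws. continuous_on (Sigma I (\<lambda>_. J)) (\<lambda>p. iterD ws F (fst p) (snd p)) \<and>
       (\<forall>t\<in>I. \<forall>u\<in>J. (\<lambda>s. iterD ws F s u) differentiable (at t) \<and>
                     (\<lambda>v. iterD ws F t v) differentiable (at u)))"

definition speed :: "(real \<Rightarrow> real \<Rightarrow> real^3) \<Rightarrow> real \<Rightarrow> real \<Rightarrow> real" where
  "speed \<gamma> t u = norm (Du \<gamma> t u)"

definition Ds :: "(real \<Rightarrow> real \<Rightarrow> real^3) \<Rightarrow> (real \<Rightarrow> real \<Rightarrow> 'a::real_normed_vector) \<Rightarrow> real \<Rightarrow> real \<Rightarrow> 'a" where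
  "Ds \<gamma> F t u = inverse (speed \<gamma> t u) *\<^sub>R Du F t u"

definition tangent :: "(real \<Rightarrow> real \<Rightarrow> real^3) \<Rightarrow> real \<Rightarrow> real \<Rightarrow> real^3" where
  "tangent \<gamma> = Ds \<gamma> \<gamma>"

definition curvature :: "(real \<Rightarrow> real \<Rightarrow> real^3) \<Rightarrow> real \<Rightarrow> real \<Rightarrow> real" where
  "curvature \<gamma> t u = norm (Ds \<gamma> (tangent \<gamma>) t u)"

definition normal :: "(real \<Rightarrow> real \<Rightarrow> real^3) \<Rightarrow> real \<Rightarrow> real \<Rightarrow> real^3" where
  "normal \<gamma> t u = inverse (curvature \<gamma> t u) *\<^sub>R Ds \<gamma> (tangent \<gamma>) t u"

definition binormal :: "(real \<Rightarrow> real \<Rightarrow> real^3) \<Rightarrow> real \<Rightarrow> real \<Rightarrow> real^3" where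
  "binormal \<gamma> t u = cross3 (tangent \<gamma> t u) (normal \<gamma> t u)"

definition torsion :: "(real \<Rightarrow> real \<Rightarrow> real^3) \<Rightarrow> real \<Rightarrow> real \<Rightarrow> real" where
  "torsion \<gamma> t u = Ds \<gamma> (normal \<gamma>) t u \<bullet> binormal \<gamma> t u"

definition nu :: "(real \<Rightarrow> real \<Rightarrow> real^3) \<Rightarrow> (real \<Rightarrow> real \<Rightarrow> real) \<Rightarrow> real \<Rightarrow> real \<Rightarrow> real^3" where
  "nu \<gamma> \<theta> t u = cos (\<theta> t u) *\<^sub>R normal \<gamma> t u + sin (\<theta> t u) *\<^sub>R binormal \<gamma> t u"

definition beta :: "(real \<Rightarrow> real \<Rightarrow> real^3) \<Rightarrow> (real \<Rightarrow> real \<Rightarrow> real) \<Rightarrow> real \<Rightarrow> real \<Rightarrow> real^3" where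
  "beta \<gamma> \<theta> t u = cross3 (tangent \<gamma> t u) (nu \<gamma> \<theta> t u)"

definition psi1 :: "(real \<Rightarrow> real \<Rightarrow> real^3) \<Rightarrow> (real \<Rightarrow> real \<Rightarrow> real) \<Rightarrow> real \<Rightarrow> real \<Rightarrow> real" where
  "psi1 \<gamma> \<theta> t u = curvature \<gamma> t u * cos (\<theta> t u)"

definition psi2 :: "(real \<Rightarrow> real \<Rightarrow> real^3) \<Rightarrow> (real \<Rightarrow> real \<Rightarrow> real) \<Rightarrow> real \<Rightarrow> real \<Rightarrow> real" where
  "psi2 \<gamma> \<theta> t u = curvature \<gamma> t u * sin (\<theta> t u)"

definition psi3 :: "(real \<Rightarrow> real \<Rightarrow> real^3) \<Rightarrow> (real \<Rightarrow> real \<Rightarrow> real) \<Rightarrow> real \<Rightarrow> real \<Rightarrow> real" where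
  "psi3 \<gamma> \<theta> t u = torsion \<gamma> t u + Ds \<gamma> \<theta> t u"

definition upsilon :: "real \<Rightarrow> (real \<Rightarrow> real \<Rightarrow> real^3) \<Rightarrow> (real \<Rightarrow> real \<Rightarrow> real) \<Rightarrow> real \<Rightarrow> real \<Rightarrow> real" where
  "upsilon H \<gamma> \<theta> t u =
     (let k = curvature \<gamma> t u; p3 = psi3 \<gamma> \<theta> t u in
      k * H
      - (k * Ds \<gamma> (psi3 \<gamma> \<theta>) t u + 2 * Ds \<gamma> (curvature \<gamma>) t u * p3) * k powi (-2) * psi1 \<gamma> \<theta> t u
      + (k ^ 3 + k * p3 ^ 2 - Ds \<gamma> (Ds \<gamma> (curvature \<gamma>)) t u) * k powi (-2) * psi2 \<gamma> \<theta> t u)"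

definition first_ff :: "(real \<Rightarrow> real \<Rightarrow> real^3) \<Rightarrow> real \<Rightarrow> real \<Rightarrow> real^2^2" where
  "first_ff X t u =
     vector [vector [Du X t u \<bullet> Du X t u, Du X t u \<bullet> Dt X t u],
             vector [Dt X t u \<bullet> Du X t u, Dt X t u \<bullet> Dt X t u]]"

definition second_ff :: "(real \<Rightarrow> real \<Rightarrow> real^3) \<Rightarrow> (real \<Rightarrow> real \<Rightarrow> real^3) \<Rightarrow> real \<Rightarrow> real \<Rightarrow> real^2^2" where
  "second_ff X n t u =
     vector [vector [Du (Du X) t u \<bullet> n t u, Dt (Du X) t u \<bullet> n t u],
             vector [Du (Dt X) t u \<bullet> n t u, Dt (Dt X) t u \<bullet> n t u]]"

definition mean_curvature :: "(real \<Rightarrow> real \<Rightarrow> real^3) \<Rightarrow> (real \<Rightarrow> real \<Rightarrow> real^3) \<Rightarrow> real \<Rightarrow> real \<Rightarrow> real" where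
  "mean_curvature X n t u = trace (second_ff X n t u ** matrix_inv (first_ff X t u))"

end

theory Submission
  imports Defs
begin

text \<open>
  Write X(u, t) = \<gamma>(t, u) and g for the speed. Then X_u = g T and X_t = \<kappa> \<nu> are orthogonal,
  so the first fundamental form is diag(g^2, \<kappa>^2) and the mean curvature is
  X_uu \<bullet> \<beta> / g^2 + X_tt \<bullet> \<beta> / \<kappa>^2. The Frenet equations give X_uu \<bullet> \<beta> = - g^2 \<kappa> sin \<theta>.
  Differentiating X_t = \<kappa> \<nu> in time and using \<nu> \<bottom> \<beta> gives X_tt \<bullet> \<beta> = \<kappa> (\<theta>_t + N_t \<bullet> B), and
  after commuting the time and parameter derivatives, \<kappa> N_t \<bullet> B becomes the binormal component of
  the second arc-length derivative of X_t, which the Frenet equations expand in \<kappa>, \<tau>, \<theta> and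
  their arc-length derivatives. With \<theta>_t = \<upsilon>_\<theta> every term except H cancels.
\<close>

lemma constant_inner_derivative_eq_0:
  fixes f g :: "real \<Rightarrow> 'a::real_inner"
  assumes f: "(f has_vector_derivative f') (at x)" and g: "(g has_vector_derivative g') (at x)"
    and S: "open S" "x \<in> S" and const: "\<And>y. y \<in> S \<Longrightarrow> f y \<bullet> g y = c"
  shows "f' \<bullet> g x + f x \<bullet> g' = 0"
proof -
  have "((\<lambda>y. f y \<bullet> g y) has_vector_derivative f x \<bullet> g' + f' \<bullet> g x) (at x)"
    by (rule bounded_bilinear.has_vector_derivative[OF bounded_bilinear_inner f g])
  then have "((\<lambda>y. c) has_vector_derivative f x \<bullet> g' + f' \<bullet> g x) (at x)"
    by (rule has_vector_derivative_transform_within_open[OF _ S]) (simp add: const)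
  then show ?thesis
    using vector_derivative_unique_at[OF _ has_vector_derivative_const] by (simp add: add.commute)
qed

lemma has_real_derivative_inverse_norm:
  fixes p :: "real \<Rightarrow> 'a::real_inner"
  assumes p: "(p has_vector_derivative q) (at x)" and nz: "p x \<noteq> 0"
  shows "((\<lambda>v. inverse (norm (p v))) has_real_derivative - (p x \<bullet> q) / norm (p x) ^ 3) (at x)"
proof -
  have "((\<lambda>v. p v \<bullet> p v) has_vector_derivative p x \<bullet> q + q \<bullet> p x) (at x)"
    by (rule bounded_bilinear.has_vector_derivative[OF bounded_bilinear_inner p p])
  then have "((\<lambda>v. p v \<bullet> p v) has_real_derivative 2 * (p x \<bullet> q)) (at x)"
    by (simp add: has_real_derivative_iff_has_vector_derivative inner_commute)
  moreover have pos: "0 < p x \<bullet> p x"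
    using nz by simp
  ultimately have "((\<lambda>v. sqrt (p v \<bullet> p v)) has_real_derivative
                     inverse (sqrt (p x \<bullet> p x)) / 2 * (2 * (p x \<bullet> q))) (at x)"
    by (intro DERIV_chain2[OF DERIV_real_sqrt])
  then have "((\<lambda>v. inverse (sqrt (p v \<bullet> p v))) has_real_derivative
      - (inverse (sqrt (p x \<bullet> p x)) / 2 * (2 * (p x \<bullet> q)) * inverse (sqrt (p x \<bullet> p x) ^ Suc (Suc 0))))
      (at x)"
    by (rule DERIV_inverse_fun) (use pos in simp)
  then show ?thesis
    unfolding norm_eq_sqrt_inner[symmetric] by (simp add: power3_eq_cube power2_eq_square field_simps)
qed

lemma has_vector_derivative_inverse_norm_scaleR:
  fixes p :: "real \<Rightarrow> 'a::real_inner" and r :: "real \<Rightarrow> 'b::real_normed_vector"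
  assumes p: "(p has_vector_derivative q) (at x)" "p x \<noteq> 0"
    and r: "(r has_vector_derivative r') (at x)"
  shows "((\<lambda>v. inverse (norm (p v)) *\<^sub>R r v) has_vector_derivative
           inverse (norm (p x)) *\<^sub>R r' - ((p x \<bullet> q) / norm (p x) ^ 3) *\<^sub>R r x) (at x)"
  using has_vector_derivative_scaleR[OF has_real_derivative_inverse_norm[OF p] r]
  by (simp add: algebra_simps)

lemma has_vector_derivative_inverse_norm_scaleR_orthogonal:
  fixes p :: "real \<Rightarrow> 'a::real_inner" and r :: "real \<Rightarrow> 'b::real_inner"
  assumes "(p has_vector_derivative q) (at x)" "p x \<noteq> 0" "(r has_vector_derivative r') (at x)"
    and "r x \<bullet> b = 0"
  shows "\<exists>D. ((\<lambda>v. inverse (norm (p v)) *\<^sub>R r v) has_vector_derivative D) (at x) \<and>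
             D \<bullet> b = inverse (norm (p x)) * (r' \<bullet> b)"
  using has_vector_derivative_inverse_norm_scaleR[OF assms(1-3)] assms(4)
  by (auto simp: inner_diff_left)

lemma bounded_bilinear_cross3: "bounded_bilinear cross3"
  using bilinear_conv_bounded_bilinear bilinear_cross by blast

lemma cross3_orthonormal_expansion:
  fixes x T N :: "real^3"
  assumes "T \<bullet> T = 1" "N \<bullet> N = 1" "T \<bullet> N = 0"
  shows "x = (x \<bullet> T) *\<^sub>R T + (x \<bullet> N) *\<^sub>R N + (x \<bullet> cross3 T N) *\<^sub>R cross3 T N"
proof -
  have "T$1 * T$1 + T$2 * T$2 + T$3 * T$3 = 1" "N$1 * N$1 + N$2 * N$2 + N$3 * N$3 = 1"
    "T$1 * N$1 + T$2 * N$2 + T$3 * N$3 = 0"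
    using assms by (simp_all add: inner_vec_def sum_3)
  then show ?thesis
    unfolding vec_eq_iff forall_3 by (simp add: cross3_def inner_vec_def sum_3 algebra_simps) algebra
qed

lemma matrix_inv_eqI:
  fixes A M :: "real^'n^'n"
  assumes "A ** M = mat 1" "M ** A = mat 1"
  shows "matrix_inv A = M"
proof -
  have "A ** matrix_inv A = mat 1 \<and> matrix_inv A ** A = mat 1"
    unfolding matrix_inv_def using someI_ex[of "\<lambda>A'. A ** A' = mat 1 \<and> A' ** A = mat 1"] assms by blast
  then have "matrix_inv A = matrix_inv A ** (A ** M)"
    using assms by (simp add: matrix_mul_rid)
  also have "\<dots> = M"
    using \<open>A ** matrix_inv A = mat 1 \<and> matrix_inv A ** A = mat 1\<close>
    by (simp add: matrix_mul_assoc matrix_mul_lid)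
  finally show ?thesis .
qed

lemma trace_mult_matrix_inv_diagonal:
  fixes a b p q r w :: real
  assumes "a \<noteq> 0" "b \<noteq> 0"
  shows "trace (vector [vector [p, q], vector [r, w]] ** matrix_inv (vector [vector [a, 0], vector [0, b]] :: real^2^2))
    = p / a + w / b"
proof -
  have "matrix_inv (vector [vector [a, 0], vector [0, b]] :: real^2^2) = vector [vector [1 / a, 0], vector [0, 1 / b]]"
    using assms by (intro matrix_inv_eqI) (auto simp: matrix_matrix_mult_def mat_def vec_eq_iff forall_2 sum_2)
  then show ?thesis
    by (simp add: trace_def sum_2 matrix_matrix_mult_def divide_inverse)
qed

section \<open>Smooth fields and the symmetry of mixed partial derivatives\<close>

lemma iterD_append: "iterD ws (iterD vs F) = iterD (ws @ vs) F"
  by (induction ws) auto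

lemma smooth_on2_iterD: "smooth_on2 I J F \<Longrightarrow> smooth_on2 I J (iterD vs F)"
  unfolding smooth_on2_def iterD_append by blast

lemma smooth_on2_has_time_derivative:
  "smooth_on2 I J F \<Longrightarrow> t \<in> I \<Longrightarrow> u \<in> J \<Longrightarrow>
    ((\<lambda>s. iterD ws F s u) has_vector_derivative iterD (True # ws) F t u) (at t)"
  unfolding smooth_on2_def by (auto simp: Dt_def vector_derivative_works[symmetric])

lemma smooth_on2_has_param_derivative:
  "smooth_on2 I J F \<Longrightarrow> t \<in> I \<Longrightarrow> u \<in> J \<Longrightarrow>
    ((\<lambda>v. iterD ws F t v) has_vector_derivative iterD (False # ws) F t u) (at u)"
  unfolding smooth_on2_def by (auto simp: Du_def vector_derivative_works[symmetric])

lemma smooth_on2_continuous_slice: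
  assumes "smooth_on2 I J F" "s \<in> I"
  shows "continuous_on J (iterD ws F s)"
proof -
  have "continuous_on (I \<times> J) (\<lambda>p. iterD ws F (fst p) (snd p))"
    using assms(1) by (simp add: smooth_on2_def)
  then have "continuous_on J (\<lambda>w. (\<lambda>p. iterD ws F (fst p) (snd p)) (s, w))"
    by (rule continuous_on_compose2) (auto intro!: continuous_intros simp: assms(2))
  then show ?thesis by simp
qed

lemma Dt_eq_integral_Dt_Du:
  fixes F :: "real \<Rightarrow> real \<Rightarrow> 'a::euclidean_space"
  assumes F: "smooth_on2 I UNIV F" and I: "open I" "convex I" and t0: "t0 \<in> I" and "a \<le> v"
  shows "Dt F t0 v = Dt F t0 a + integral {a..v} (Dt (Du F) t0)"
proof -
  have F_eq: "F s v = F s a + integral {a..v} (Du F s)" if "s \<in> I" for s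
  proof -
    have "(Du F s has_integral (F s v - F s a)) {a..v}"
      using smooth_on2_has_param_derivative[OF F that, of _ "[]"] \<open>a \<le> v\<close>
      by (intro fundamental_theorem_of_calculus) (auto intro: has_vector_derivative_at_within)
    then show ?thesis by (simp add: integral_unique)
  qed
  have "((\<lambda>s. integral (cbox a v) (Du F s)) has_vector_derivative integral (cbox a v) (Dt (Du F) t0))
          (at t0 within I)"
  proof (rule leibniz_rule_vector_derivative[OF _ _ _ t0 I(2)])
    show "((\<lambda>s. Du F s w) has_vector_derivative Dt (Du F) s w) (at s within I)" if "s \<in> I" for s w
      using smooth_on2_has_time_derivative[OF F that, of w "[False]"]
      by (auto intro: has_vector_derivative_at_within)
    show "Du F s integrable_on cbox a v" if "s \<in> I" for s
    proof (rule integrable_continuous)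
      show "continuous_on (cbox a v) (Du F s)"
        using continuous_on_subset[OF smooth_on2_continuous_slice[OF F that, of "[False]"]] by simp
    qed
    show "continuous_on (I \<times> cbox a v) (\<lambda>(s, w). Dt (Du F) s w)"
    proof (rule continuous_on_subset)
      have "continuous_on (I \<times> UNIV) (\<lambda>p. iterD [True, False] F (fst p) (snd p))"
        using F unfolding smooth_on2_def by blast
      then show "continuous_on (I \<times> UNIV) (\<lambda>(s, w). Dt (Du F) s w)"
        by (simp add: case_prod_beta)
    qed auto
  qed
  then have "((\<lambda>s. integral {a..v} (Du F s)) has_vector_derivative integral {a..v} (Dt (Du F) t0)) (at t0)"
    using at_within_open[OF t0 I(1)] by simp
  then have "((\<lambda>s. F s a + integral {a..v} (Du F s)) has_vector_derivative
               Dt F t0 a + integral {a..v} (Dt (Du F) t0)) (at t0)"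
    using smooth_on2_has_time_derivative[OF F t0, of a "[]"] by (intro has_vector_derivative_add) simp_all
  then have "((\<lambda>s. F s v) has_vector_derivative Dt F t0 a + integral {a..v} (Dt (Du F) t0)) (at t0)"
    by (rule has_vector_derivative_transform_within_open[OF _ I(1) t0]) (simp add: F_eq)
  then show ?thesis
    by (simp add: Dt_def vector_derivative_at)
qed

lemma Dt_Du_commute:
  fixes F :: "real \<Rightarrow> real \<Rightarrow> 'a::euclidean_space"
  assumes F: "smooth_on2 I UNIV F" and I: "open I" "convex I" and t0: "t0 \<in> I"
  shows "Dt (Du F) t0 u = Du (Dt F) t0 u"
proof -
  have "((\<lambda>v. integral {u - 1..v} (Dt (Du F) t0)) has_vector_derivative Dt (Du F) t0 u)
          (at u within {u - 1..u + 1})"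
    using smooth_on2_continuous_slice[OF F t0, of "[True, False]"]
    by (intro integral_has_vector_derivative) (auto intro: continuous_on_subset)
  moreover have "at u within {u - 1..u + 1} = at u"
    by (rule at_within_interior) auto
  ultimately have "((\<lambda>v. Dt F t0 (u - 1) + integral {u - 1..v} (Dt (Du F) t0))
                      has_vector_derivative Dt (Du F) t0 u) (at u)"
    using has_vector_derivative_add[OF has_vector_derivative_const] by fastforce
  then have "((\<lambda>v. Dt F t0 v) has_vector_derivative Dt (Du F) t0 u) (at u)"
  proof (rule has_vector_derivative_transform_within_open[where S = "{u - 1<..}"])
    show "Dt F t0 (u - 1) + integral {u - 1..v} (Dt (Du F) t0) = Dt F t0 v" if "v \<in> {u - 1<..}" for v
      using Dt_eq_integral_Dt_Du[OF F I t0, of "u - 1" v] that by simp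
  qed auto
  then show ?thesis
    by (simp add: Du_def vector_derivative_at)
qed

section \<open>A differentiation-closed class of smooth slices\<close>

text \<open>Curvature, torsion and their arc-length derivatives are built from slices of smooth
  fields by the operations below. As the class is closed under differentiation, they can be
  differentiated in u as often as needed without proving their joint smoothness in (t, u).\<close>

inductive smooth_real :: "(real \<Rightarrow> real) \<Rightarrow> bool" and smooth_vec :: "(real \<Rightarrow> real^3) \<Rightarrow> bool"
where
  smooth_real_slice: "smooth_on2 I UNIV F \<Longrightarrow> t \<in> I \<Longrightarrow> smooth_real (iterD ws F t)"
| smooth_real_const: "smooth_real (\<lambda>u. c)"
| smooth_real_add: "smooth_real f \<Longrightarrow> smooth_real g \<Longrightarrow> smooth_real (\<lambda>u. f u + g u)"
| smooth_real_mult: "smooth_real f \<Longrightarrow> smooth_real g \<Longrightarrow> smooth_real (\<lambda>u. f u * g u)"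
| smooth_real_inverse: "smooth_real f \<Longrightarrow> (\<forall>u. f u \<noteq> 0) \<Longrightarrow> smooth_real (\<lambda>u. inverse (f u))"
| smooth_real_sqrt: "smooth_real f \<Longrightarrow> (\<forall>u. f u > 0) \<Longrightarrow> smooth_real (\<lambda>u. sqrt (f u))"
| smooth_real_sin: "smooth_real f \<Longrightarrow> smooth_real (\<lambda>u. sin (f u))"
| smooth_real_cos: "smooth_real f \<Longrightarrow> smooth_real (\<lambda>u. cos (f u))"
| smooth_real_inner: "smooth_vec f \<Longrightarrow> smooth_vec g \<Longrightarrow> smooth_real (\<lambda>u. f u \<bullet> g u)"
| smooth_vec_slice: "smooth_on2 I UNIV G \<Longrightarrow> t \<in> I \<Longrightarrow> smooth_vec (iterD ws G t)"
| smooth_vec_add: "smooth_vec f \<Longrightarrow> smooth_vec g \<Longrightarrow> smooth_vec (\<lambda>u. f u + g u)"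
| smooth_vec_scaleR: "smooth_real a \<Longrightarrow> smooth_vec f \<Longrightarrow> smooth_vec (\<lambda>u. a u *\<^sub>R f u)"
| smooth_vec_cross: "smooth_vec f \<Longrightarrow> smooth_vec g \<Longrightarrow> smooth_vec (\<lambda>u. cross3 (f u) (g u))"

lemma smooth_real_minus: "smooth_real f \<Longrightarrow> smooth_real (\<lambda>u. - f u)"
  using smooth_real_mult[OF smooth_real_const[of "- 1"]] by simp

lemma smooth_real_diff: "smooth_real f \<Longrightarrow> smooth_real g \<Longrightarrow> smooth_real (\<lambda>u. f u - g u)"
  using smooth_real_add[OF _ smooth_real_minus] by simp

lemma smooth_real_smooth_vec_has_derivative:
  shows "smooth_real f \<Longrightarrow> \<exists>f'. smooth_real f' \<and> (\<forall>u. (f has_real_derivative f' u) (at u))"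
    and "smooth_vec h \<Longrightarrow> \<exists>h'. smooth_vec h' \<and> (\<forall>u. (h has_vector_derivative h' u) (at u))"
proof (induction f and h rule: smooth_real_smooth_vec.inducts)
  case (smooth_real_slice I F t ws)
  show ?case
  proof (intro exI conjI allI)
    show "smooth_real (iterD (False # ws) F t)"
      by (rule smooth_real_smooth_vec.smooth_real_slice[OF smooth_real_slice])
    show "(iterD ws F t has_real_derivative iterD (False # ws) F t u) (at u)" for u
      unfolding has_real_derivative_iff_has_vector_derivative
      by (rule smooth_on2_has_param_derivative[OF smooth_real_slice UNIV_I])
  qed
next
  case (smooth_real_const c)
  show ?case by (intro exI[of _ "\<lambda>u. 0"]) (auto intro: smooth_real_smooth_vec.intros)
next
  case (smooth_real_add f g)
  then obtain f' g' where "smooth_real f'" "\<forall>u. (f has_real_derivative f' u) (at u)"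
    "smooth_real g'" "\<forall>u. (g has_real_derivative g' u) (at u)" by blast
  then show ?case
    by (intro exI[of _ "\<lambda>u. f' u + g' u"])
       (auto intro!: smooth_real_smooth_vec.intros derivative_eq_intros)
next
  case (smooth_real_mult f g)
  then obtain f' g' where "smooth_real f'" "\<forall>u. (f has_real_derivative f' u) (at u)"
    "smooth_real g'" "\<forall>u. (g has_real_derivative g' u) (at u)" by blast
  with smooth_real_mult show ?case
    by (intro exI[of _ "\<lambda>u. f' u * g u + f u * g' u"])
       (auto intro!: smooth_real_smooth_vec.intros derivative_eq_intros)
next
  case (smooth_real_inverse f)
  then obtain f' where "smooth_real f'" "\<forall>u. (f has_real_derivative f' u) (at u)" by blast
  with smooth_real_inverse show ?case
    by (intro exI[of _ "\<lambda>u. - (f' u * (inverse (f u) * inverse (f u)))"])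
       (auto intro!: smooth_real_minus smooth_real_smooth_vec.intros derivative_eq_intros simp: power2_eq_square)
next
  case (smooth_real_sqrt f)
  then obtain f' where f': "smooth_real f'" "\<forall>u. (f has_real_derivative f' u) (at u)" by blast
  have pos: "f u > 0" for u
    using smooth_real_sqrt.hyps(2) by blast
  then have "smooth_real (\<lambda>u. f' u * inverse (sqrt (f u) * 2))"
    using smooth_real_sqrt.hyps(1) f'(1)
    by (intro smooth_real_mult smooth_real_inverse smooth_real_smooth_vec.smooth_real_sqrt
          smooth_real_const) (auto simp: less_imp_neq[symmetric])
  moreover have "((\<lambda>u. sqrt (f u)) has_real_derivative f' u * inverse (sqrt (f u) * 2)) (at u)" for u
    using DERIV_chain2[OF DERIV_real_sqrt[OF pos] f'(2)[rule_format]]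
    by (simp add: field_simps)
  ultimately show ?case by blast
next
  case (smooth_real_sin f)
  then obtain f' where "smooth_real f'" "\<forall>u. (f has_real_derivative f' u) (at u)" by blast
  with smooth_real_sin show ?case
    by (intro exI[of _ "\<lambda>u. cos (f u) * f' u"])
       (auto intro!: smooth_real_smooth_vec.intros derivative_eq_intros)
next
  case (smooth_real_cos f)
  then obtain f' where "smooth_real f'" "\<forall>u. (f has_real_derivative f' u) (at u)" by blast
  with smooth_real_cos show ?case
    by (intro exI[of _ "\<lambda>u. - (sin (f u) * f' u)"])
       (auto intro!: smooth_real_minus smooth_real_smooth_vec.intros derivative_eq_intros)
next
  case (smooth_real_inner f g)
  then obtain f' g' where "smooth_vec f'" "\<forall>u. (f has_vector_derivative f' u) (at u)"
    "smooth_vec g'" "\<forall>u. (g has_vector_derivative g' u) (at u)" by blast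
  with smooth_real_inner show ?case
    by (intro exI[of _ "\<lambda>u. f u \<bullet> g' u + f' u \<bullet> g u"])
       (auto intro!: smooth_real_smooth_vec.intros
          bounded_bilinear.has_vector_derivative[OF bounded_bilinear_inner]
          simp: has_real_derivative_iff_has_vector_derivative)
next
  case (smooth_vec_slice I G t ws)
  show ?case
  proof (intro exI conjI allI)
    show "smooth_vec (iterD (False # ws) G t)"
      by (rule smooth_real_smooth_vec.smooth_vec_slice[OF smooth_vec_slice])
    show "(iterD ws G t has_vector_derivative iterD (False # ws) G t u) (at u)" for u
      by (rule smooth_on2_has_param_derivative[OF smooth_vec_slice UNIV_I])
  qed
next
  case (smooth_vec_add f g)
  then obtain f' g' where "smooth_vec f'" "\<forall>u. (f has_vector_derivative f' u) (at u)"
    "smooth_vec g'" "\<forall>u. (g has_vector_derivative g' u) (at u)" by blast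
  then show ?case
    by (intro exI[of _ "\<lambda>u. f' u + g' u"])
       (auto intro!: smooth_real_smooth_vec.intros has_vector_derivative_add)
next
  case (smooth_vec_scaleR a f)
  then obtain a' f' where "smooth_real a'" "\<forall>u. (a has_real_derivative a' u) (at u)"
    "smooth_vec f'" "\<forall>u. (f has_vector_derivative f' u) (at u)" by blast
  with smooth_vec_scaleR show ?case
    by (intro exI[of _ "\<lambda>u. a u *\<^sub>R f' u + a' u *\<^sub>R f u"])
       (auto intro!: smooth_real_smooth_vec.intros has_vector_derivative_scaleR)
next
  case (smooth_vec_cross f g)
  then obtain f' g' where "smooth_vec f'" "\<forall>u. (f has_vector_derivative f' u) (at u)"
    "smooth_vec g'" "\<forall>u. (g has_vector_derivative g' u) (at u)" by blast
  with smooth_vec_cross show ?case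
    by (intro exI[of _ "\<lambda>u. cross3 (f u) (g' u) + cross3 (f' u) (g u)"])
       (auto intro!: smooth_real_smooth_vec.intros
          bounded_bilinear.has_vector_derivative[OF bounded_bilinear_cross3])
qed

lemma smooth_real_derivative:
  assumes "smooth_real f"
  shows smooth_real_vector_derivative: "smooth_real (\<lambda>u. vector_derivative f (at u))"
    and smooth_real_has_derivative: "(f has_real_derivative vector_derivative f (at u)) (at u)"
    and smooth_real_differentiable: "f differentiable (at u)"
proof -
  obtain f' where f': "smooth_real f'" "\<forall>u. (f has_real_derivative f' u) (at u)"
    using smooth_real_smooth_vec_has_derivative(1)[OF assms] by blast
  then have eq: "vector_derivative f (at u) = f' u" for u
    by (auto intro!: vector_derivative_at simp: has_real_derivative_iff_has_vector_derivative)
  show "smooth_real (\<lambda>u. vector_derivative f (at u))" "(f has_real_derivative vector_derivative f (at u)) (at u)"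
    using f' by (simp_all add: eq)
  then show "f differentiable (at u)"
    using real_differentiable_def differentiable_def by blast
qed

lemma smooth_vec_derivative:
  assumes "smooth_vec f"
  shows smooth_vec_vector_derivative: "smooth_vec (\<lambda>u. vector_derivative f (at u))"
    and smooth_vec_differentiable: "f differentiable (at u)"
proof -
  obtain f' where f': "smooth_vec f'" "\<forall>u. (f has_vector_derivative f' u) (at u)"
    using smooth_real_smooth_vec_has_derivative(2)[OF assms] by blast
  then have eq: "vector_derivative f (at u) = f' u" for u
    by (auto intro!: vector_derivative_at)
  show "smooth_vec (\<lambda>u. vector_derivative f (at u))"
    using f' by (simp add: eq)
  show "f differentiable (at u)"
    using f' differentiableI_vector by blast
qed

lemma smooth_real_norm: "smooth_vec f \<Longrightarrow> (\<And>u. f u \<noteq> 0) \<Longrightarrow> smooth_real (\<lambda>u. norm (f u))"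
  unfolding norm_eq_sqrt_inner by (intro smooth_real_sqrt smooth_real_inner) auto

section \<open>Arc-length derivatives\<close>

lemma Ds_cong: "F t = G t \<Longrightarrow> Ds \<gamma> F t u = Ds \<gamma> G t u"
  by (simp add: Ds_def Du_def)

lemma Ds_const: "Ds \<gamma> (\<lambda>t u. c) t u = 0"
  by (simp add: Ds_def Du_def)

lemma Ds_eqI: "(F t has_vector_derivative F') (at u) \<Longrightarrow> Ds \<gamma> F t u = inverse (speed \<gamma> t u) *\<^sub>R F'"
  by (simp add: Ds_def Du_def vector_derivative_at)

lemma Ds_add:
  fixes F G :: "real \<Rightarrow> real \<Rightarrow> 'a::real_normed_vector"
  assumes "F t differentiable (at u)" "G t differentiable (at u)"
  shows "Ds \<gamma> (\<lambda>t u. F t u + G t u) t u = Ds \<gamma> F t u + Ds \<gamma> G t u"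
  using assms by (simp add: Ds_def Du_def scaleR_add_right)

lemma Ds_bounded_bilinear:
  assumes bil: "bounded_bilinear bil"
    and F: "F t differentiable (at u)" and G: "G t differentiable (at u)"
  shows "Ds \<gamma> (\<lambda>t u. bil (F t u) (G t u)) t u = bil (Ds \<gamma> F t u) (G t u) + bil (F t u) (Ds \<gamma> G t u)"
proof -
  have "((\<lambda>v. bil (F t v) (G t v)) has_vector_derivative bil (F t u) (Du G t u) + bil (Du F t u) (G t u)) (at u)"
    using F G unfolding Du_def vector_derivative_works
    by (rule bounded_bilinear.has_vector_derivative[OF bil])
  from Ds_eqI[of "\<lambda>t u. bil (F t u) (G t u)", OF this] show ?thesis
    by (simp add: Ds_def bounded_bilinear.scaleR_left[OF bil]
        bounded_bilinear.scaleR_right[OF bil] scaleR_add_right)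
qed

lemmas Ds_scaleR = Ds_bounded_bilinear[OF bounded_bilinear_scaleR]

lemmas Ds_mult = Ds_bounded_bilinear[OF bounded_bilinear_mult]

lemmas Ds_inner = Ds_bounded_bilinear[OF bounded_bilinear_inner]

lemmas Ds_cross3 = Ds_bounded_bilinear[OF bounded_bilinear_cross3]

lemma Ds_compose_real:
  assumes "(f has_real_derivative f') (at (F t u))" "F t differentiable (at u)"
  shows "Ds \<gamma> (\<lambda>t u. f (F t u)) t u = f' * Ds \<gamma> F t u"
proof -
  have "((\<lambda>v. f (F t v)) has_vector_derivative f' * Du F t u) (at u)"
    using assms DERIV_chain2 unfolding Du_def
    by (metis has_real_derivative_iff_has_vector_derivative vector_derivative_works)
  from Ds_eqI[of "\<lambda>t u. f (F t u)", OF this] show ?thesis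
    by (simp add: Ds_def)
qed

lemma Ds_sin:
  fixes F :: "real \<Rightarrow> real \<Rightarrow> real"
  shows "F t differentiable (at u) \<Longrightarrow> Ds \<gamma> (\<lambda>t u. sin (F t u)) t u = cos (F t u) * Ds \<gamma> F t u"
  using Ds_compose_real[of sin "cos (F t u)" F t u] by (simp add: DERIV_sin)

lemma Ds_cos:
  fixes F :: "real \<Rightarrow> real \<Rightarrow> real"
  shows "F t differentiable (at u) \<Longrightarrow> Ds \<gamma> (\<lambda>t u. cos (F t u)) t u = - sin (F t u) * Ds \<gamma> F t u"
  using Ds_compose_real[of cos "- sin (F t u)" F t u] by (simp add: DERIV_cos)

lemma Ds_constant_inner:
  assumes "F t differentiable (at u)" "G t differentiable (at u)" "\<And>v. F t v \<bullet> G t v = c"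
  shows "Ds \<gamma> F t u \<bullet> G t u + F t u \<bullet> Ds \<gamma> G t u = 0"
proof -
  have "Ds \<gamma> (\<lambda>t u. F t u \<bullet> G t u) t u = Ds \<gamma> (\<lambda>t u. c) t u"
    using assms(3) by (intro Ds_cong) auto
  also have "\<dots> = 0"
    by (rule Ds_const)
  finally show ?thesis
    using Ds_inner[where F = F and G = G, OF assms(1,2)] by simp
qed

section \<open>The Frenet frame of a regular family of curves\<close>

lemma tangent_eq: "tangent \<gamma> t u = inverse (speed \<gamma> t u) *\<^sub>R Du \<gamma> t u"
  by (simp add: tangent_def Ds_def)

lemma binormal_orthogonal:
  shows inner_tangent_binormal: "tangent \<gamma> t u \<bullet> binormal \<gamma> t u = 0"
    and inner_normal_binormal: "normal \<gamma> t u \<bullet> binormal \<gamma> t u = 0"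
    and inner_binormal_tangent: "binormal \<gamma> t u \<bullet> tangent \<gamma> t u = 0"
    and inner_binormal_normal: "binormal \<gamma> t u \<bullet> normal \<gamma> t u = 0"
  unfolding binormal_def by (simp_all add: dot_cross_self)

locale regular_curve_family =
  fixes \<gamma> :: "real \<Rightarrow> real \<Rightarrow> real^3" and I :: "real set"
  assumes smooth_curve: "smooth_on2 I UNIV \<gamma>"
    and open_times: "open I" and convex_times: "convex I"
    and speed_pos: "t \<in> I \<Longrightarrow> speed \<gamma> t u > 0"
    and curvature_pos: "t \<in> I \<Longrightarrow> curvature \<gamma> t u > 0"
begin

lemma smooth_vec_curve: "t \<in> I \<Longrightarrow> smooth_vec (\<gamma> t)"
  using smooth_vec_slice[OF smooth_curve, of t "[]"] by simp

lemma smooth_vec_Du_curve: "t \<in> I \<Longrightarrow> smooth_vec (Du \<gamma> t)"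
  using smooth_vec_slice[OF smooth_curve, of t "[False]"] by simp

lemma smooth_real_speed: "t \<in> I \<Longrightarrow> smooth_real (speed \<gamma> t)"
  using speed_pos[of t]
  by (auto simp: speed_def[abs_def] intro!: smooth_real_norm smooth_vec_Du_curve)

lemma smooth_real_inverse_speed: "t \<in> I \<Longrightarrow> smooth_real (\<lambda>u. inverse (speed \<gamma> t u))"
  using speed_pos[of t] smooth_real_speed[of t]
  by (auto intro!: smooth_real_inverse simp: less_imp_neq[symmetric])

lemma Ds_slice_eq: "Ds \<gamma> F t = (\<lambda>u. inverse (speed \<gamma> t u) *\<^sub>R vector_derivative (F t) (at u))"
  by (simp add: fun_eq_iff Ds_def Du_def)

lemma smooth_vec_Ds: "t \<in> I \<Longrightarrow> smooth_vec (F t) \<Longrightarrow> smooth_vec (Ds \<gamma> F t)"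
  unfolding Ds_slice_eq
  by (intro smooth_vec_scaleR smooth_real_inverse_speed smooth_vec_vector_derivative)

lemma smooth_real_Ds: "t \<in> I \<Longrightarrow> smooth_real (F t) \<Longrightarrow> smooth_real (Ds \<gamma> F t)"
  unfolding Ds_slice_eq real_scaleR_def
  by (intro smooth_real_mult smooth_real_inverse_speed smooth_real_vector_derivative)

lemma smooth_vec_tangent: "t \<in> I \<Longrightarrow> smooth_vec (tangent \<gamma> t)"
  unfolding tangent_def by (intro smooth_vec_Ds smooth_vec_curve)

lemma smooth_real_curvature: "t \<in> I \<Longrightarrow> smooth_real (curvature \<gamma> t)"
  using curvature_pos[of t] smooth_real_norm[OF smooth_vec_Ds[OF _ smooth_vec_tangent]]
  by (force simp: curvature_def[abs_def])

lemma smooth_vec_normal: "t \<in> I \<Longrightarrow> smooth_vec (normal \<gamma> t)"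
  unfolding normal_def[abs_def]
  by (intro smooth_vec_scaleR smooth_real_inverse smooth_real_curvature smooth_vec_Ds smooth_vec_tangent)
     (simp_all add: less_imp_neq[OF curvature_pos, symmetric])

lemma smooth_vec_binormal: "t \<in> I \<Longrightarrow> smooth_vec (binormal \<gamma> t)"
  unfolding binormal_def[abs_def] by (intro smooth_vec_cross smooth_vec_tangent smooth_vec_normal)

lemma smooth_real_torsion: "t \<in> I \<Longrightarrow> smooth_real (torsion \<gamma> t)"
  unfolding torsion_def[abs_def]
  by (intro smooth_real_inner smooth_vec_binormal smooth_vec_Ds smooth_vec_normal)

lemma inner_tangent_tangent: "t \<in> I \<Longrightarrow> tangent \<gamma> t u \<bullet> tangent \<gamma> t u = 1"
  using speed_pos[of t u]
  by (simp add: tangent_eq speed_def power2_norm_eq_inner[symmetric] power_mult_distrib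
      power_inverse[symmetric])

lemma Ds_tangent: "t \<in> I \<Longrightarrow> Ds \<gamma> (tangent \<gamma>) t u = curvature \<gamma> t u *\<^sub>R normal \<gamma> t u"
  using curvature_pos[of t u] by (simp add: normal_def)

lemma inner_normal_normal: "t \<in> I \<Longrightarrow> normal \<gamma> t u \<bullet> normal \<gamma> t u = 1"
  using curvature_pos[of t u]
  by (simp add: normal_def curvature_def power2_norm_eq_inner[symmetric] power_mult_distrib
      power_inverse[symmetric])

lemma inner_tangent_normal: "t \<in> I \<Longrightarrow> tangent \<gamma> t u \<bullet> normal \<gamma> t u = 0"
  using Ds_constant_inner[of "tangent \<gamma>" t u "tangent \<gamma>" 1 \<gamma>] curvature_pos[of t u]
  by (simp add: smooth_vec_differentiable smooth_vec_tangent inner_tangent_tangent Ds_tangent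
      inner_commute)

lemma inner_normal_tangent: "t \<in> I \<Longrightarrow> normal \<gamma> t u \<bullet> tangent \<gamma> t u = 0"
  using inner_tangent_normal by (simp add: inner_commute)

lemma inner_binormal_binormal: "t \<in> I \<Longrightarrow> binormal \<gamma> t u \<bullet> binormal \<gamma> t u = 1"
  using norm_cross_dot[of "tangent \<gamma> t u" "normal \<gamma> t u"]
    norm_eq_1[of "tangent \<gamma> t u"] norm_eq_1[of "normal \<gamma> t u"]
  by (simp add: binormal_def[symmetric] power2_norm_eq_inner inner_tangent_tangent
      inner_normal_normal inner_tangent_normal)

lemmas frenet_inner =
  inner_tangent_tangent inner_normal_normal inner_binormal_binormal inner_tangent_normal
  inner_normal_tangent binormal_orthogonal

lemma Ds_normal:
  assumes t: "t \<in> I"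
  shows "Ds \<gamma> (normal \<gamma>) t u = (- curvature \<gamma> t u) *\<^sub>R tangent \<gamma> t u + torsion \<gamma> t u *\<^sub>R binormal \<gamma> t u"
proof -
  have "Ds \<gamma> (tangent \<gamma>) t u \<bullet> normal \<gamma> t u + tangent \<gamma> t u \<bullet> Ds \<gamma> (normal \<gamma>) t u = 0"
    using t inner_tangent_normal
    by (intro Ds_constant_inner smooth_vec_differentiable smooth_vec_tangent smooth_vec_normal)
  then have "Ds \<gamma> (normal \<gamma>) t u \<bullet> tangent \<gamma> t u = - curvature \<gamma> t u"
    using t by (simp add: Ds_tangent frenet_inner inner_commute)
  moreover have "Ds \<gamma> (normal \<gamma>) t u \<bullet> normal \<gamma> t u = 0"
    using Ds_constant_inner[of "normal \<gamma>" t u "normal \<gamma>" 1 \<gamma>] t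
    by (simp add: smooth_vec_differentiable smooth_vec_normal inner_normal_normal inner_commute)
  ultimately show ?thesis
    using cross3_orthonormal_expansion[of "tangent \<gamma> t u" "normal \<gamma> t u" "Ds \<gamma> (normal \<gamma>) t u"] t
    by (simp add: frenet_inner torsion_def binormal_def)
qed

lemma Ds_binormal:
  assumes t: "t \<in> I"
  shows "Ds \<gamma> (binormal \<gamma>) t u = (- torsion \<gamma> t u) *\<^sub>R normal \<gamma> t u"
proof -
  have "Ds \<gamma> (binormal \<gamma>) t u
      = cross3 (Ds \<gamma> (tangent \<gamma>) t u) (normal \<gamma> t u) + cross3 (tangent \<gamma> t u) (Ds \<gamma> (normal \<gamma>) t u)"
    unfolding binormal_def[abs_def] using t
    by (intro Ds_cross3 smooth_vec_differentiable smooth_vec_tangent smooth_vec_normal)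
  also have "\<dots> = torsion \<gamma> t u *\<^sub>R cross3 (tangent \<gamma> t u) (binormal \<gamma> t u)"
    using t by (simp add: Ds_tangent Ds_normal cross_mult_left cross_mult_right cross_add_right
        Cross3.right_diff_distrib)
  also have "\<dots> = (- torsion \<gamma> t u) *\<^sub>R normal \<gamma> t u"
    using t by (simp add: binormal_def Lagrange frenet_inner)
  finally show ?thesis .
qed

lemma Ds_frame_combination:
  assumes t: "t \<in> I" and a: "smooth_real (a t)" and b: "smooth_real (b t)" and c: "smooth_real (c t)"
  shows "Ds \<gamma> (\<lambda>t u. a t u *\<^sub>R tangent \<gamma> t u + b t u *\<^sub>R normal \<gamma> t u + c t u *\<^sub>R binormal \<gamma> t u) t u
    = (Ds \<gamma> a t u - curvature \<gamma> t u * b t u) *\<^sub>R tangent \<gamma> t u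
      + (Ds \<gamma> b t u + curvature \<gamma> t u * a t u - torsion \<gamma> t u * c t u) *\<^sub>R normal \<gamma> t u
      + (Ds \<gamma> c t u + torsion \<gamma> t u * b t u) *\<^sub>R binormal \<gamma> t u"
proof -
  have smooth: "smooth_vec (\<lambda>u. a t u *\<^sub>R tangent \<gamma> t u)" "smooth_vec (\<lambda>u. b t u *\<^sub>R normal \<gamma> t u)"
    "smooth_vec (\<lambda>u. c t u *\<^sub>R binormal \<gamma> t u)"
    using t a b c by (auto intro!: smooth_vec_scaleR smooth_vec_tangent smooth_vec_normal smooth_vec_binormal)
  have diff: "a t differentiable (at u)" "b t differentiable (at u)" "c t differentiable (at u)"
    "tangent \<gamma> t differentiable (at u)" "normal \<gamma> t differentiable (at u)"
    "binormal \<gamma> t differentiable (at u)"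
    using t a b c by (auto intro!: smooth_real_differentiable smooth_vec_differentiable
      smooth_vec_tangent smooth_vec_normal smooth_vec_binormal)
  have "Ds \<gamma> (\<lambda>t u. a t u *\<^sub>R tangent \<gamma> t u + b t u *\<^sub>R normal \<gamma> t u + c t u *\<^sub>R binormal \<gamma> t u) t u
      = Ds \<gamma> (\<lambda>t u. a t u *\<^sub>R tangent \<gamma> t u) t u + Ds \<gamma> (\<lambda>t u. b t u *\<^sub>R normal \<gamma> t u) t u
        + Ds \<gamma> (\<lambda>t u. c t u *\<^sub>R binormal \<gamma> t u) t u"
    using smooth Ds_add[where F = "\<lambda>t u. a t u *\<^sub>R tangent \<gamma> t u + b t u *\<^sub>R normal \<gamma> t u"
        and G = "\<lambda>t u. c t u *\<^sub>R binormal \<gamma> t u"]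
      Ds_add[where F = "\<lambda>t u. a t u *\<^sub>R tangent \<gamma> t u" and G = "\<lambda>t u. b t u *\<^sub>R normal \<gamma> t u"]
    by (simp add: smooth_vec_differentiable smooth_vec_add)
  also have "\<dots> = (Ds \<gamma> a t u *\<^sub>R tangent \<gamma> t u + a t u *\<^sub>R Ds \<gamma> (tangent \<gamma>) t u)
      + (Ds \<gamma> b t u *\<^sub>R normal \<gamma> t u + b t u *\<^sub>R Ds \<gamma> (normal \<gamma>) t u)
      + (Ds \<gamma> c t u *\<^sub>R binormal \<gamma> t u + c t u *\<^sub>R Ds \<gamma> (binormal \<gamma>) t u)"
    using diff by (simp add: Ds_scaleR)
  finally show ?thesis
    using t by (simp add: Ds_tangent Ds_normal Ds_binormal algebra_simps)
qed

lemma beta_eq: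
  assumes t: "t \<in> I"
  shows "beta \<gamma> \<theta> t u = cos (\<theta> t u) *\<^sub>R binormal \<gamma> t u - sin (\<theta> t u) *\<^sub>R normal \<gamma> t u"
proof -
  have "cross3 (tangent \<gamma> t u) (binormal \<gamma> t u) = - normal \<gamma> t u"
    using t by (simp add: binormal_def Lagrange frenet_inner)
  then show ?thesis
    by (simp add: beta_def nu_def cross_add_right cross_mult_right binormal_def[symmetric])
qed

lemma inner_nu_nu: "t \<in> I \<Longrightarrow> nu \<gamma> \<theta> t u \<bullet> nu \<gamma> \<theta> t u = 1"
  by (simp add: nu_def inner_add_left inner_add_right frenet_inner flip: power2_eq_square)

lemma inner_tangent_nu: "t \<in> I \<Longrightarrow> tangent \<gamma> t u \<bullet> nu \<gamma> \<theta> t u = 0"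
  by (simp add: nu_def inner_add_right frenet_inner)

(* the u-derivative of 1 / speed is - speed_rate *)
abbreviation speed_rate :: "real \<Rightarrow> real \<Rightarrow> real" where
  "speed_rate t u \<equiv> (Du \<gamma> t u \<bullet> Du (Du \<gamma>) t u) / speed \<gamma> t u ^ 3"

lemma Du_curve_eq: "t \<in> I \<Longrightarrow> Du \<gamma> t u = speed \<gamma> t u *\<^sub>R tangent \<gamma> t u"
  using speed_pos[of t u] by (simp add: tangent_eq)

lemma Du_tangent_eq:
  assumes t: "t \<in> I"
  shows "Du (tangent \<gamma>) t u = (speed \<gamma> t u * curvature \<gamma> t u) *\<^sub>R normal \<gamma> t u"
proof -
  have "Du (tangent \<gamma>) t u = speed \<gamma> t u *\<^sub>R Ds \<gamma> (tangent \<gamma>) t u"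
    using speed_pos[OF t, of u] by (simp add: Ds_def)
  then show ?thesis
    using t by (simp add: Ds_tangent)
qed

lemma Du_Du_curve:
  assumes t: "t \<in> I"
  shows "Du (Du \<gamma>) t u = Du (speed \<gamma>) t u *\<^sub>R tangent \<gamma> t u
    + (speed \<gamma> t u ^ 2 * curvature \<gamma> t u) *\<^sub>R normal \<gamma> t u"
proof -
  have "(speed \<gamma> t has_real_derivative Du (speed \<gamma>) t u) (at u)"
    using smooth_real_speed[OF t] by (simp add: Du_def smooth_real_has_derivative)
  moreover have "(tangent \<gamma> t has_vector_derivative Du (tangent \<gamma>) t u) (at u)"
    using t by (simp add: Du_def vector_derivative_works[symmetric] smooth_vec_differentiable
        smooth_vec_tangent)
  ultimately have "((\<lambda>v. speed \<gamma> t v *\<^sub>R tangent \<gamma> t v) has_vector_derivative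
      speed \<gamma> t u *\<^sub>R Du (tangent \<gamma>) t u + Du (speed \<gamma>) t u *\<^sub>R tangent \<gamma> t u) (at u)"
    by (rule has_vector_derivative_scaleR)
  moreover have "Du \<gamma> t = (\<lambda>v. speed \<gamma> t v *\<^sub>R tangent \<gamma> t v)"
    using t by (simp add: fun_eq_iff Du_curve_eq)
  ultimately show ?thesis
    using t by (simp add: Du_def[of "Du \<gamma>"] vector_derivative_at Du_tangent_eq power2_eq_square)
qed

lemma inner_Du_curve_binormal: "t \<in> I \<Longrightarrow> Du \<gamma> t u \<bullet> binormal \<gamma> t u = 0"
  by (simp add: Du_curve_eq binormal_orthogonal)

lemma inner_Du_Du_curve_binormal: "t \<in> I \<Longrightarrow> Du (Du \<gamma>) t u \<bullet> binormal \<gamma> t u = 0"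
  by (simp add: Du_Du_curve inner_add_left binormal_orthogonal)

lemma Du_Du_curve_inner_beta:
  "t \<in> I \<Longrightarrow> Du (Du \<gamma>) t u \<bullet> beta \<gamma> \<theta> t u = - (speed \<gamma> t u ^ 2 * curvature \<gamma> t u * sin (\<theta> t u))"
  by (simp add: Du_Du_curve beta_eq inner_add_left inner_diff_right frenet_inner)

lemma has_vector_derivative_inverse_speed_scaleR:
  assumes t: "t \<in> I" and r: "(r has_vector_derivative r') (at u)"
  shows "((\<lambda>v. inverse (speed \<gamma> t v) *\<^sub>R r v) has_vector_derivative
    inverse (speed \<gamma> t u) *\<^sub>R r' - speed_rate t u *\<^sub>R r u) (at u)"
  unfolding speed_def
proof (rule has_vector_derivative_inverse_norm_scaleR[OF _ _ r])
  show "(Du \<gamma> t has_vector_derivative Du (Du \<gamma>) t u) (at u)"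
    using smooth_on2_has_param_derivative[OF smooth_curve t, of u "[False]"] by simp
  show "Du \<gamma> t u \<noteq> 0"
    using speed_pos[OF t, of u] by (auto simp: speed_def)
qed

lemma Du_tangent_eq_curve_derivatives:
  assumes t: "t \<in> I"
  shows "Du (tangent \<gamma>) t u = inverse (speed \<gamma> t u) *\<^sub>R Du (Du \<gamma>) t u
    - speed_rate t u *\<^sub>R Du \<gamma> t u"
proof -
  have "(Du \<gamma> t has_vector_derivative Du (Du \<gamma>) t u) (at u)"
    using smooth_on2_has_param_derivative[OF smooth_curve t, of u "[False]"] by simp
  note vector_derivative_at[OF has_vector_derivative_inverse_speed_scaleR[OF t this]]
  moreover have "tangent \<gamma> t = (\<lambda>v. inverse (speed \<gamma> t v) *\<^sub>R Du \<gamma> t v)"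
    by (simp add: fun_eq_iff tangent_eq)
  ultimately show ?thesis
    by (simp add: Du_def[of "tangent \<gamma>"])
qed

lemma Ds_Ds_eq_curve_derivatives:
  assumes t: "t \<in> I" and F: "(Du F t has_vector_derivative F'') (at u)"
  shows "Ds \<gamma> (Ds \<gamma> F) t u = inverse (speed \<gamma> t u) *\<^sub>R (inverse (speed \<gamma> t u) *\<^sub>R F''
    - speed_rate t u *\<^sub>R Du F t u)"
proof -
  note vector_derivative_at[OF has_vector_derivative_inverse_speed_scaleR[OF t F]]
  moreover have "Ds \<gamma> F t = (\<lambda>v. inverse (speed \<gamma> t v) *\<^sub>R Du F t v)"
    by (simp add: fun_eq_iff Ds_def)
  ultimately show ?thesis
    by (simp add: Ds_def[of \<gamma> "Ds \<gamma> F"] Du_def[of "Ds \<gamma> F"])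
qed

lemma Du_tangent_time_derivative:
  assumes t0: "t0 \<in> I"
  shows "\<exists>E'. ((\<lambda>s. Du (tangent \<gamma>) s u) has_vector_derivative E') (at t0) \<and>
    E' \<bullet> binormal \<gamma> t0 u = inverse (speed \<gamma> t0 u) * (Dt (Du (Du \<gamma>)) t0 u \<bullet> binormal \<gamma> t0 u)
      - speed_rate t0 u * (Dt (Du \<gamma>) t0 u \<bullet> binormal \<gamma> t0 u)"
proof -
  define P Q Pt Qt where "P = (\<lambda>s. Du \<gamma> s u)" and "Q = (\<lambda>s. Du (Du \<gamma>) s u)"
    and "Pt = Dt (Du \<gamma>) t0 u" and "Qt = Dt (Du (Du \<gamma>)) t0 u"
  define c where "c = (\<lambda>s. (P s \<bullet> Q s) / norm (P s) ^ 3)"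
  have dP: "(P has_vector_derivative Pt) (at t0)"
    using smooth_on2_has_time_derivative[OF smooth_curve t0, of u "[False]"] by (simp add: P_def Pt_def)
  have dQ: "(Q has_vector_derivative Qt) (at t0)"
    using smooth_on2_has_time_derivative[OF smooth_curve t0, of u "[False, False]"]
    by (simp add: Q_def Qt_def)
  have P0: "P t0 \<noteq> 0"
    using speed_pos[OF t0, of u] by (auto simp: P_def speed_def)
  have "c differentiable (at t0)"
    using differentiableI_vector[OF dP] differentiableI_vector[OF dQ] P0 unfolding c_def
    by (auto intro!: derivative_intros differentiable_chain_at[unfolded o_def, where g = norm])
  then obtain c' where dc: "(c has_real_derivative c') (at t0)"
    using real_differentiable_def differentiable_def by blast
  define E' where "E' = (inverse (norm (P t0)) *\<^sub>R Qt - ((P t0 \<bullet> Pt) / norm (P t0) ^ 3) *\<^sub>R Q t0)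
    - (c t0 *\<^sub>R Pt + c' *\<^sub>R P t0)"
  have "((\<lambda>s. inverse (norm (P s)) *\<^sub>R Q s - c s *\<^sub>R P s) has_vector_derivative E') (at t0)"
    unfolding E'_def
    by (intro has_vector_derivative_diff has_vector_derivative_inverse_norm_scaleR
        has_vector_derivative_scaleR dP P0 dQ dc)
  then have "((\<lambda>s. Du (tangent \<gamma>) s u) has_vector_derivative E') (at t0)"
    by (rule has_vector_derivative_transform_within_open[OF _ open_times t0])
       (simp add: Du_tangent_eq_curve_derivatives P_def Q_def c_def speed_def)
  moreover have "P t0 \<bullet> binormal \<gamma> t0 u = 0" "Q t0 \<bullet> binormal \<gamma> t0 u = 0"
    using t0 by (simp_all add: P_def Q_def inner_Du_curve_binormal inner_Du_Du_curve_binormal)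
  then have "E' \<bullet> binormal \<gamma> t0 u = inverse (speed \<gamma> t0 u) * (Qt \<bullet> binormal \<gamma> t0 u)
      - speed_rate t0 u * (Pt \<bullet> binormal \<gamma> t0 u)"
    by (simp add: E'_def inner_diff_left inner_add_left c_def speed_def P_def Q_def)
  ultimately show ?thesis
    unfolding Pt_def Qt_def by blast
qed

lemma normal_time_derivative:
  assumes t0: "t0 \<in> I"
  shows "((\<lambda>s. normal \<gamma> s u) has_vector_derivative Dt (normal \<gamma>) t0 u) (at t0)" (is ?derivative)
    and "curvature \<gamma> t0 u * (Dt (normal \<gamma>) t0 u \<bullet> binormal \<gamma> t0 u)
      = inverse (speed \<gamma> t0 u) * (inverse (speed \<gamma> t0 u) * (Dt (Du (Du \<gamma>)) t0 u \<bullet> binormal \<gamma> t0 u)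
        - speed_rate t0 u * (Dt (Du \<gamma>) t0 u \<bullet> binormal \<gamma> t0 u))" (is ?binormal_part)
proof -
  obtain E' where dE: "((\<lambda>s. Du (tangent \<gamma>) s u) has_vector_derivative E') (at t0)"
    and E'B: "E' \<bullet> binormal \<gamma> t0 u = inverse (speed \<gamma> t0 u) * (Dt (Du (Du \<gamma>)) t0 u \<bullet> binormal \<gamma> t0 u)
      - speed_rate t0 u * (Dt (Du \<gamma>) t0 u \<bullet> binormal \<gamma> t0 u)"
    using Du_tangent_time_derivative[OF t0] by blast
  have dP: "((\<lambda>s. Du \<gamma> s u) has_vector_derivative Dt (Du \<gamma>) t0 u) (at t0)"
    using smooth_on2_has_time_derivative[OF smooth_curve t0, of u "[False]"] by simp
  have "Du \<gamma> t0 u \<noteq> 0" "Du (tangent \<gamma>) t0 u \<bullet> binormal \<gamma> t0 u = 0"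
    using speed_pos[OF t0, of u] by (auto simp: speed_def Du_tangent_eq t0 binormal_orthogonal)
  from has_vector_derivative_inverse_norm_scaleR_orthogonal[OF dP this(1) dE this(2)]
  obtain Z' where "((\<lambda>s. inverse (norm (Du \<gamma> s u)) *\<^sub>R Du (tangent \<gamma>) s u) has_vector_derivative Z') (at t0)"
    and Z'B: "Z' \<bullet> binormal \<gamma> t0 u = inverse (speed \<gamma> t0 u) * (E' \<bullet> binormal \<gamma> t0 u)"
    unfolding speed_def by blast
  then have dZ: "((\<lambda>s. Ds \<gamma> (tangent \<gamma>) s u) has_vector_derivative Z') (at t0)"
    by (simp add: Ds_def speed_def)
  have "Ds \<gamma> (tangent \<gamma>) t0 u \<noteq> 0" "Ds \<gamma> (tangent \<gamma>) t0 u \<bullet> binormal \<gamma> t0 u = 0"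
    using curvature_pos[OF t0, of u] inner_normal_normal[OF t0, of u]
    by (auto simp: Ds_tangent[OF t0] binormal_orthogonal)
  from has_vector_derivative_inverse_norm_scaleR_orthogonal[OF dZ this(1) dZ this(2)]
  obtain N' where "((\<lambda>s. inverse (norm (Ds \<gamma> (tangent \<gamma>) s u)) *\<^sub>R Ds \<gamma> (tangent \<gamma>) s u)
      has_vector_derivative N') (at t0)"
    and N'B: "N' \<bullet> binormal \<gamma> t0 u = inverse (curvature \<gamma> t0 u) * (Z' \<bullet> binormal \<gamma> t0 u)"
    unfolding curvature_def by blast
  then have dN: "((\<lambda>s. normal \<gamma> s u) has_vector_derivative N') (at t0)"
    by (simp add: normal_def curvature_def)
  moreover have "Dt (normal \<gamma>) t0 u = N'"
    using dN by (simp add: Dt_def vector_derivative_at)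
  ultimately show ?derivative ?binormal_part
    using curvature_pos[OF t0, of u] N'B Z'B E'B by simp_all
qed

lemma curvature_Dt_normal_inner_binormal:
  assumes t0: "t0 \<in> I"
  shows "curvature \<gamma> t0 u * (Dt (normal \<gamma>) t0 u \<bullet> binormal \<gamma> t0 u)
    = Ds \<gamma> (Ds \<gamma> (Dt \<gamma>)) t0 u \<bullet> binormal \<gamma> t0 u"
proof -
  have Dt_Du: "Dt (Du \<gamma>) t0 = Du (Dt \<gamma>) t0"
    using Dt_Du_commute[OF smooth_curve open_times convex_times t0] by (simp add: fun_eq_iff)
  have "Dt (Du (Du \<gamma>)) t0 u = Du (Dt (Du \<gamma>)) t0 u"
    using Dt_Du_commute[OF smooth_on2_iterD[OF smooth_curve, of "[False]"] open_times convex_times t0]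
    by simp
  also have "\<dots> = Du (Du (Dt \<gamma>)) t0 u"
    by (simp add: Du_def Dt_Du)
  finally have Dt_Du_Du: "Dt (Du (Du \<gamma>)) t0 u = Du (Du (Dt \<gamma>)) t0 u" .
  have "(Du (Dt \<gamma>) t0 has_vector_derivative Du (Du (Dt \<gamma>)) t0 u) (at u)"
    using smooth_on2_has_param_derivative[OF smooth_curve t0, of u "[False, True]"] by simp
  then show ?thesis
    using normal_time_derivative(2)[OF t0, of u]
    by (simp add: Ds_Ds_eq_curve_derivatives[OF t0] Dt_Du Dt_Du_Du inner_diff_left)
qed

lemma binormal_time_differentiable:
  assumes t0: "t0 \<in> I"
  shows "(\<lambda>s. binormal \<gamma> s u) differentiable (at t0)"
proof -
  have dP: "((\<lambda>s. Du \<gamma> s u) has_vector_derivative Dt (Du \<gamma>) t0 u) (at t0)"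
    using smooth_on2_has_time_derivative[OF smooth_curve t0, of u "[False]"] by simp
  moreover have "Du \<gamma> t0 u \<noteq> 0"
    using speed_pos[OF t0, of u] by (auto simp: speed_def)
  ultimately have "(\<lambda>s. tangent \<gamma> s u) differentiable (at t0)"
    using has_vector_derivative_inverse_norm_scaleR[OF dP _ dP] differentiableI_vector
    by (fastforce simp: tangent_eq speed_def)
  then show ?thesis
    using normal_time_derivative(1)[OF t0, of u] differentiableI_vector
    unfolding binormal_def vector_derivative_works
    by (blast intro: bounded_bilinear.has_vector_derivative[OF bounded_bilinear_cross3])
qed

end

section \<open>The framed curvature flow\<close>

locale framed_curvature_flow = regular_curve_family +
  fixes \<theta> :: "real \<Rightarrow> real \<Rightarrow> real"
  assumes smooth_angle: "smooth_on2 I UNIV \<theta>"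
    and flow: "t \<in> I \<Longrightarrow> Dt \<gamma> t u = curvature \<gamma> t u *\<^sub>R nu \<gamma> \<theta> t u"
begin

lemma curvature_time_derivative:
  assumes t0: "t0 \<in> I"
  obtains k' where "((\<lambda>s. curvature \<gamma> s u) has_real_derivative k') (at t0)"
proof -
  have dX: "((\<lambda>s. Dt \<gamma> s u) has_vector_derivative Dt (Dt \<gamma>) t0 u) (at t0)"
    using smooth_on2_has_time_derivative[OF smooth_curve t0, of u "[True]"] by simp
  moreover have "Dt \<gamma> t0 u \<noteq> 0"
    using t0 curvature_pos[OF t0, of u] inner_nu_nu[OF t0, of \<theta> u] by (auto simp: flow)
  ultimately have "(\<lambda>s. norm (Dt \<gamma> s u)) differentiable (at t0)"
    using differentiableI_vector differentiable_chain_at[unfolded o_def, where g = norm] by fastforce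
  then obtain k' where "((\<lambda>s. norm (Dt \<gamma> s u)) has_real_derivative k') (at t0)"
    using real_differentiable_def differentiable_def by blast
  moreover have "norm (Dt \<gamma> s u) = curvature \<gamma> s u" if "s \<in> I" for s
    using that curvature_pos[OF that, of u] inner_nu_nu[OF that, of \<theta> u]
    by (simp add: flow norm_eq_1[symmetric])
  ultimately have "((\<lambda>s. curvature \<gamma> s u) has_real_derivative k') (at t0)"
    by (rule has_field_derivative_transform_within_open[OF _ open_times t0])
  then show ?thesis
    by (rule that)
qed

lemma nu_time_derivative:
  assumes t0: "t0 \<in> I"
  shows "\<exists>\<nu>'. ((\<lambda>s. nu \<gamma> \<theta> s u) has_vector_derivative \<nu>') (at t0) \<and>
    \<nu>' \<bullet> beta \<gamma> \<theta> t0 u = Dt \<theta> t0 u + Dt (normal \<gamma>) t0 u \<bullet> binormal \<gamma> t0 u"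
proof -
  define N B N' \<theta>' c s where "N = normal \<gamma> t0 u" and "B = binormal \<gamma> t0 u"
    and "N' = Dt (normal \<gamma>) t0 u" and "\<theta>' = Dt \<theta> t0 u" and "c = cos (\<theta> t0 u)" and "s = sin (\<theta> t0 u)"
  have dN: "((\<lambda>s. normal \<gamma> s u) has_vector_derivative N') (at t0)"
    using normal_time_derivative(1)[OF t0] by (simp add: N'_def)
  obtain B' where dB: "((\<lambda>s. binormal \<gamma> s u) has_vector_derivative B') (at t0)"
    using binormal_time_differentiable[OF t0] vector_derivative_works by blast
  have d\<theta>: "((\<lambda>s. \<theta> s u) has_real_derivative \<theta>') (at t0)"
    using smooth_on2_has_time_derivative[OF smooth_angle t0, of u "[]"]
    by (simp add: \<theta>'_def has_real_derivative_iff_has_vector_derivative)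
  define \<nu>' where "\<nu>' = (c *\<^sub>R N' + (- s * \<theta>') *\<^sub>R N) + (s *\<^sub>R B' + (c * \<theta>') *\<^sub>R B)"
  have "((\<lambda>s. nu \<gamma> \<theta> s u) has_vector_derivative \<nu>') (at t0)"
    unfolding nu_def \<nu>'_def c_def s_def N_def B_def
    by (intro has_vector_derivative_add has_vector_derivative_scaleR DERIV_fun_cos DERIV_fun_sin d\<theta> dN dB)
  moreover have "N' \<bullet> N = 0" "B' \<bullet> B = 0" "B' \<bullet> N = - (N' \<bullet> B)"
    using constant_inner_derivative_eq_0[OF dN dN open_times t0, of 1]
      constant_inner_derivative_eq_0[OF dB dB open_times t0, of 1]
      constant_inner_derivative_eq_0[OF dN dB open_times t0, of 0]
    by (simp_all add: N_def B_def frenet_inner inner_commute)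
  then have "\<nu>' \<bullet> beta \<gamma> \<theta> t0 u = (c\<^sup>2 + s\<^sup>2) * (\<theta>' + N' \<bullet> B)"
    unfolding \<nu>'_def beta_eq[OF t0] c_def[symmetric] s_def[symmetric] N_def[symmetric] B_def[symmetric]
    using t0 by (simp add: inner_add_left inner_diff_right N_def B_def frenet_inner inner_commute[of _ N]
        inner_commute[of _ B] power2_eq_square algebra_simps)
  ultimately show ?thesis
    unfolding c_def s_def \<theta>'_def N'_def B_def by auto
qed

lemma Dt_Dt_curve_inner_beta:
  assumes t0: "t0 \<in> I"
  shows "Dt (Dt \<gamma>) t0 u \<bullet> beta \<gamma> \<theta> t0 u
    = curvature \<gamma> t0 u * Dt \<theta> t0 u + Ds \<gamma> (Ds \<gamma> (Dt \<gamma>)) t0 u \<bullet> binormal \<gamma> t0 u"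
proof -
  obtain \<nu>' where d\<nu>: "((\<lambda>s. nu \<gamma> \<theta> s u) has_vector_derivative \<nu>') (at t0)"
    and \<nu>'_beta: "\<nu>' \<bullet> beta \<gamma> \<theta> t0 u = Dt \<theta> t0 u + Dt (normal \<gamma>) t0 u \<bullet> binormal \<gamma> t0 u"
    using nu_time_derivative[OF t0] by blast
  obtain k' where dk: "((\<lambda>s. curvature \<gamma> s u) has_real_derivative k') (at t0)"
    using curvature_time_derivative[OF t0] .
  have "((\<lambda>s. Dt \<gamma> s u) has_vector_derivative curvature \<gamma> t0 u *\<^sub>R \<nu>' + k' *\<^sub>R nu \<gamma> \<theta> t0 u) (at t0)"
    using has_vector_derivative_scaleR[OF dk d\<nu>]
    by (rule has_vector_derivative_transform_within_open[OF _ open_times t0]) (simp add: flow)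
  then have "Dt (Dt \<gamma>) t0 u = curvature \<gamma> t0 u *\<^sub>R \<nu>' + k' *\<^sub>R nu \<gamma> \<theta> t0 u"
    by (simp add: Dt_def vector_derivative_at)
  moreover have "nu \<gamma> \<theta> t0 u \<bullet> beta \<gamma> \<theta> t0 u = 0"
    by (simp add: beta_def dot_cross_self)
  ultimately show ?thesis
    using \<nu>'_beta curvature_Dt_normal_inner_binormal[OF t0, of u]
    by (simp add: inner_add_left algebra_simps)
qed

lemma smooth_real_angle: "t \<in> I \<Longrightarrow> smooth_real (\<theta> t)"
  using smooth_real_slice[OF smooth_angle, of t "[]"] by simp

lemmas smooth_real_rules = smooth_real_differentiable smooth_real_const smooth_real_add smooth_real_diff
  smooth_real_minus smooth_real_mult smooth_real_sin smooth_real_cos smooth_real_angle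
  smooth_real_curvature smooth_real_torsion smooth_real_Ds

lemma smooth_real_psi:
  assumes "t \<in> I"
  shows "smooth_real (psi1 \<gamma> \<theta> t)" "smooth_real (psi2 \<gamma> \<theta> t)"
  using assms by (simp_all add: psi1_def[abs_def] psi2_def[abs_def] smooth_real_rules)

lemma Ds_psi1:
  assumes t: "t \<in> I"
  shows "Ds \<gamma> (psi1 \<gamma> \<theta>) t u
    = Ds \<gamma> (curvature \<gamma>) t u * cos (\<theta> t u) - curvature \<gamma> t u * sin (\<theta> t u) * Ds \<gamma> \<theta> t u"
  using t by (simp add: psi1_def[abs_def] Ds_mult Ds_cos smooth_real_rules)

lemma Ds_psi2:
  assumes t: "t \<in> I"
  shows "Ds \<gamma> (psi2 \<gamma> \<theta>) t u
    = Ds \<gamma> (curvature \<gamma>) t u * sin (\<theta> t u) + curvature \<gamma> t u * cos (\<theta> t u) * Ds \<gamma> \<theta> t u"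
  using t by (simp add: psi2_def[abs_def] Ds_mult Ds_sin smooth_real_rules)

lemma Ds_Ds_psi2:
  assumes t: "t \<in> I"
  shows "Ds \<gamma> (Ds \<gamma> (psi2 \<gamma> \<theta>)) t u
    = Ds \<gamma> (Ds \<gamma> (curvature \<gamma>)) t u * sin (\<theta> t u)
      + 2 * Ds \<gamma> (curvature \<gamma>) t u * cos (\<theta> t u) * Ds \<gamma> \<theta> t u
      - curvature \<gamma> t u * sin (\<theta> t u) * (Ds \<gamma> \<theta> t u)\<^sup>2
      + curvature \<gamma> t u * cos (\<theta> t u) * Ds \<gamma> (Ds \<gamma> \<theta>) t u"
proof -
  have "Ds \<gamma> (Ds \<gamma> (psi2 \<gamma> \<theta>)) t u = Ds \<gamma> (\<lambda>t u. Ds \<gamma> (curvature \<gamma>) t u * sin (\<theta> t u)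
      + curvature \<gamma> t u * cos (\<theta> t u) * Ds \<gamma> \<theta> t u) t u"
    using t by (intro Ds_cong) (simp add: fun_eq_iff Ds_psi2)
  also have "\<dots> = Ds \<gamma> (Ds \<gamma> (curvature \<gamma>)) t u * sin (\<theta> t u)
      + 2 * Ds \<gamma> (curvature \<gamma>) t u * cos (\<theta> t u) * Ds \<gamma> \<theta> t u
      - curvature \<gamma> t u * sin (\<theta> t u) * (Ds \<gamma> \<theta> t u)\<^sup>2
      + curvature \<gamma> t u * cos (\<theta> t u) * Ds \<gamma> (Ds \<gamma> \<theta>) t u"
    using t by (simp add: Ds_add Ds_mult Ds_sin Ds_cos smooth_real_rules power2_eq_square algebra_simps)
  finally show ?thesis .
qed

lemma Ds_psi3:
  assumes t: "t \<in> I"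
  shows "Ds \<gamma> (psi3 \<gamma> \<theta>) t u = Ds \<gamma> (torsion \<gamma>) t u + Ds \<gamma> (Ds \<gamma> \<theta>) t u"
  using t by (simp add: psi3_def[abs_def] Ds_add smooth_real_rules)

lemma Ds_Dt_curve:
  assumes t: "t \<in> I"
  shows "Ds \<gamma> (Dt \<gamma>) t u = (- (curvature \<gamma> t u * psi1 \<gamma> \<theta> t u)) *\<^sub>R tangent \<gamma> t u
    + (Ds \<gamma> (psi1 \<gamma> \<theta>) t u - torsion \<gamma> t u * psi2 \<gamma> \<theta> t u) *\<^sub>R normal \<gamma> t u
    + (Ds \<gamma> (psi2 \<gamma> \<theta>) t u + torsion \<gamma> t u * psi1 \<gamma> \<theta> t u) *\<^sub>R binormal \<gamma> t u"
proof -
  have "Dt \<gamma> t = (\<lambda>u. 0 *\<^sub>R tangent \<gamma> t u + psi1 \<gamma> \<theta> t u *\<^sub>R normal \<gamma> t u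
      + psi2 \<gamma> \<theta> t u *\<^sub>R binormal \<gamma> t u)"
    using t by (simp add: fun_eq_iff flow nu_def psi1_def psi2_def scaleR_add_right)
  then have "Ds \<gamma> (Dt \<gamma>) t u = Ds \<gamma> (\<lambda>t u. (\<lambda>t u. 0) t u *\<^sub>R tangent \<gamma> t u
      + psi1 \<gamma> \<theta> t u *\<^sub>R normal \<gamma> t u + psi2 \<gamma> \<theta> t u *\<^sub>R binormal \<gamma> t u) t u"
    by (intro Ds_cong) simp
  then show ?thesis
    using Ds_frame_combination[where a = "\<lambda>t u. 0" and b = "psi1 \<gamma> \<theta>" and c = "psi2 \<gamma> \<theta>",
        OF t smooth_real_const smooth_real_psi[OF t]]
    by (simp add: Ds_const)
qed

lemma Ds_Ds_Dt_curve_inner_binormal: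
  assumes t: "t \<in> I"
  shows "Ds \<gamma> (Ds \<gamma> (Dt \<gamma>)) t u \<bullet> binormal \<gamma> t u
    = Ds \<gamma> (Ds \<gamma> (psi2 \<gamma> \<theta>)) t u + Ds \<gamma> (torsion \<gamma>) t u * psi1 \<gamma> \<theta> t u
      + 2 * torsion \<gamma> t u * Ds \<gamma> (psi1 \<gamma> \<theta>) t u - (torsion \<gamma> t u)\<^sup>2 * psi2 \<gamma> \<theta> t u"
proof -
  define a b c where "a = (\<lambda>t u. - (curvature \<gamma> t u * psi1 \<gamma> \<theta> t u))"
    and "b = (\<lambda>t u. Ds \<gamma> (psi1 \<gamma> \<theta>) t u - torsion \<gamma> t u * psi2 \<gamma> \<theta> t u)"
    and "c = (\<lambda>t u. Ds \<gamma> (psi2 \<gamma> \<theta>) t u + torsion \<gamma> t u * psi1 \<gamma> \<theta> t u)"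
  have smooth: "smooth_real (a t)" "smooth_real (b t)" "smooth_real (c t)"
    using t smooth_real_psi[OF t] by (simp_all add: a_def b_def c_def smooth_real_rules)
  have "Ds \<gamma> (Ds \<gamma> (Dt \<gamma>)) t u = Ds \<gamma> (\<lambda>t u. a t u *\<^sub>R tangent \<gamma> t u + b t u *\<^sub>R normal \<gamma> t u
      + c t u *\<^sub>R binormal \<gamma> t u) t u"
    using t by (intro Ds_cong) (simp add: fun_eq_iff Ds_Dt_curve a_def b_def c_def)
  then have "Ds \<gamma> (Ds \<gamma> (Dt \<gamma>)) t u \<bullet> binormal \<gamma> t u = Ds \<gamma> c t u + torsion \<gamma> t u * b t u"
    using t by (simp add: Ds_frame_combination[where a = a and b = b and c = c, OF t smooth] inner_add_left frenet_inner)
  also have "Ds \<gamma> c t u = Ds \<gamma> (Ds \<gamma> (psi2 \<gamma> \<theta>)) t u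
      + Ds \<gamma> (torsion \<gamma>) t u * psi1 \<gamma> \<theta> t u + torsion \<gamma> t u * Ds \<gamma> (psi1 \<gamma> \<theta>) t u"
    using t smooth_real_psi[OF t] by (simp add: c_def Ds_add Ds_mult smooth_real_rules)
  finally show ?thesis
    by (simp add: b_def power2_eq_square algebra_simps)
qed

lemma first_ff_eq:
  assumes t: "t \<in> I"
  shows "first_ff \<gamma> t u = vector [vector [(speed \<gamma> t u)\<^sup>2, 0], vector [0, (curvature \<gamma> t u)\<^sup>2]]"
proof -
  have "Du \<gamma> t u \<bullet> Dt \<gamma> t u = 0"
    using t by (simp add: Du_curve_eq flow inner_tangent_nu)
  moreover have "Dt \<gamma> t u \<bullet> Dt \<gamma> t u = (curvature \<gamma> t u)\<^sup>2"
    using t by (simp add: flow inner_nu_nu power2_eq_square)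
  ultimately show ?thesis
    by (simp add: first_ff_def speed_def power2_norm_eq_inner inner_commute)
qed

lemma mean_curvature_eq:
  assumes t: "t \<in> I"
  shows "mean_curvature \<gamma> (beta \<gamma> \<theta>) t u
    = Du (Du \<gamma>) t u \<bullet> beta \<gamma> \<theta> t u / (speed \<gamma> t u)\<^sup>2 + Dt (Dt \<gamma>) t u \<bullet> beta \<gamma> \<theta> t u / (curvature \<gamma> t u)\<^sup>2"
  using speed_pos[OF t, of u] curvature_pos[OF t, of u]
  by (simp add: mean_curvature_def first_ff_eq[OF t] second_ff_def trace_mult_matrix_inv_diagonal)

lemma mean_curvature_trajectory:
  assumes t: "t \<in> I"
  shows "mean_curvature \<gamma> (beta \<gamma> \<theta>) t u = - psi2 \<gamma> \<theta> t u + Dt \<theta> t u / curvature \<gamma> t u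
    + Ds \<gamma> (Ds \<gamma> (Dt \<gamma>)) t u \<bullet> binormal \<gamma> t u / (curvature \<gamma> t u)\<^sup>2"
  using speed_pos[OF t, of u] curvature_pos[OF t, of u]
  by (simp add: mean_curvature_eq[OF t] Du_Du_curve_inner_beta[OF t] Dt_Dt_curve_inner_beta[OF t]
      psi2_def power2_eq_square field_simps)

lemma mean_curvature_trajectory_eq:
  assumes t: "t \<in> I" and angle_velocity: "Dt \<theta> t u = upsilon H \<gamma> \<theta> t u"
  shows "mean_curvature \<gamma> (beta \<gamma> \<theta>) t u = H"
  using curvature_pos[OF t, of u]
  by (simp add: mean_curvature_trajectory[OF t] angle_velocity upsilon_def Let_def Ds_psi3[OF t]
      Ds_Ds_Dt_curve_inner_binormal[OF t] Ds_psi1[OF t] Ds_Ds_psi2[OF t] psi1_def psi2_def psi3_def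
      power_int_minus power2_eq_square power3_eq_cube field_simps)

end

theorem mainTheorem16:
  fixes H tbar :: real and \<gamma> :: "real \<Rightarrow> real \<Rightarrow> real^3" and \<theta> :: "real \<Rightarrow> real \<Rightarrow> real"
  assumes tbar: "tbar > 0"
    and smooth_gamma: "smooth_on2 {0<..<tbar} UNIV \<gamma>"
    and smooth_theta: "smooth_on2 {0<..<tbar} UNIV \<theta>"
    and closed_gamma: "\<forall>t\<in>{0<..<tbar}. \<forall>u. \<gamma> t (u + 2 * pi) = \<gamma> t u"
    and closed_theta: "\<forall>t\<in>{0<..<tbar}. \<forall>u. cos (\<theta> t (u + 2 * pi)) = cos (\<theta> t u) \<and>
                                           sin (\<theta> t (u + 2 * pi)) = sin (\<theta> t u)"
    and regular: "\<forall>t\<in>{0<..<tbar}. \<forall>u. speed \<gamma> t u > 0"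
    and curv_pos: "\<forall>t\<in>{0<..<tbar}. \<forall>u. curvature \<gamma> t u > 0"
    and flow_gamma: "\<forall>t\<in>{0<..<tbar}. \<forall>u. Dt \<gamma> t u = curvature \<gamma> t u *\<^sub>R nu \<gamma> \<theta> t u"
    and flow_theta: "\<forall>t\<in>{0<..<tbar}. \<forall>u. Dt \<theta> t u = upsilon H \<gamma> \<theta> t u"
  shows "\<forall>t\<in>{0<..<tbar}. \<forall>u. mean_curvature \<gamma> (beta \<gamma> \<theta>) t u = H"
proof -
  \<comment> \<open>The identity is pointwise.\<close>
  interpret framed_curvature_flow \<gamma> "{0<..<tbar}" \<theta>
    using smooth_gamma smooth_theta regular curv_pos flow_gamma
    by unfold_locales (auto simp: convex_real_interval)
  show ?thesis
    using flow_theta by (auto intro: mean_curvature_trajectory_eq)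
qed

end
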